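(* Consider $N$ agents $\mathcal{V}=\{1,\dots,N\}$ interacting over a fixed graph in which agent $i$ has the nonempty neighbor set $\mathcal{N}_i$ of cardinality $n_i$. Let $\beta\in[0,1]$ and let $(q_p(k))_{k\ge0}$ be a sequence with values in $\{-1,1\}$. The opinions evolve by $$\theta_i(k+1)=\theta_i(k)+\bigl(1-\theta_i(k)^2\bigr)\Bigl[\beta\bigl(q_p(k)-\theta_i(k)\bigr)+(1-\beta)\frac{1}{n_i}\sum_{j\in\mathcal{N}_i}\bigl(q_j(k)-\theta_i(k)\bigr)\Bigr],$$ with actions $q_j(k)=1$ if $\theta_j(k)>0$ or ($\theta_j(k)=0$ and $q_j(k-1)=1$), and $q_j(k)=-1$ if $\theta_j(k)<0$ or ($\theta_j(k)=0$ and $q_j(k-1)=-1$). Let $n_i^{\pm}(k)=|\{j\in\mathcal{N}_i:q_j(k)=\pm1\}|$. Let $i\in\mathcal{V}$ with $\theta_i(0)\in(-1,1)$ and assume $\beta<1/(1+n_i)$. Then for every $k$: - if $n_i^+(k)>n_i^-(k)$ and $q_i(k)=1$, then $q_i(k+1)=1$; - if $n_i^-(k)>n_i^+(k)$ and $q_i(k)=-1$, then $q_i(k+1)=-1$.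
   Context: Opinions take values in $[-1,1]$. The neighbor set $\mathcal{N}_i$ consists of the agents $j$ with $(j,i)$ an edge of the graph. *)

theory Defs
  imports Complex_Main
begin

definition nbrs :: "'a set \<Rightarrow> ('a \<times> 'a) set \<Rightarrow> 'a \<Rightarrow> 'a set" where
  "nbrs V E i = {j \<in> V. (j, i) \<in> E}"

definition npos :: "'a set \<Rightarrow> ('a \<times> 'a) set \<Rightarrow> ('a \<Rightarrow> real) \<Rightarrow> 'a \<Rightarrow> nat" where
  "npos V E qk i = card {j \<in> nbrs V E i. qk j = 1}"

definition nneg :: "'a set \<Rightarrow> ('a \<times> 'a) set \<Rightarrow> ('a \<Rightarrow> real) \<Rightarrow> 'a \<Rightarrow> nat" where
  "nneg V E qk i = card {j \<in> nbrs V E i. qk j = -1}"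

end

theory Submission
  imports Defs
begin

text \<open>Write \<open>c = \<beta> q\<^sub>p(k) + (1 - \<beta>) (n\<^sub>i\<^sup>+(k) - n\<^sub>i\<^sup>-(k)) / n\<^sub>i\<close> for the weighted
  target of agent \<open>i\<close>. The update then reads \<open>\<theta> \<mapsto> \<theta> + (1 - \<theta>\<^sup>2)(c - \<theta>) = \<theta>\<^sup>3 + (1 - \<theta>\<^sup>2) c\<close>,
  which is nonnegative for every \<open>\<theta> \<ge> 0\<close> as soon as \<open>0 \<le> c \<le> 1\<close>. A strict majority of
  \<open>+1\<close> neighbours gives \<open>(1 - \<beta>)/n\<^sub>i\<close> as a lower bound for the neighbour term, and
  \<open>\<beta> < 1/(1 + n\<^sub>i)\<close> says precisely that this beats the worst stubborn term \<open>-\<beta>\<close>; so \<open>c > 0\<close>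
  and the opinion cannot cross zero. The opposite case follows since the update is odd in
  \<open>(c, \<theta>)\<close>. No invariance of \<open>[-1, 1]\<close> is needed.\<close>

definition opinion_update :: "real \<Rightarrow> real \<Rightarrow> real" where
  "opinion_update c t = t + (1 - t\<^sup>2) * (c - t)"

lemma opinion_update_cubic: "opinion_update c t = t ^ 3 + (1 - t\<^sup>2) * c"
  unfolding opinion_update_def by (simp add: algebra_simps power2_eq_square power3_eq_cube)

lemma opinion_update_minus: "opinion_update (- c) (- t) = - opinion_update c t"
  unfolding opinion_update_def by (simp add: algebra_simps)

lemma opinion_update_nonneg:
  assumes "0 \<le> c" "c \<le> 1" "0 \<le> t"
  shows "0 \<le> opinion_update c t"
proof (cases "t \<le> c")
  case True
  then have "t\<^sup>2 \<le> 1"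
    using assms by (simp add: power_le_one)
  then show ?thesis
    unfolding opinion_update_cubic using assms by simp
next
  case False
  have "opinion_update c t = c + t\<^sup>2 * (t - c)"
    unfolding opinion_update_cubic by (simp add: algebra_simps power2_eq_square power3_eq_cube)
  then show ?thesis
    using False assms by simp
qed

lemma target_bounds:
  fixes \<beta> n p s :: real
  assumes "0 \<le> \<beta>" "\<beta> < 1 / (1 + n)" "1 \<le> n" "\<bar>p\<bar> \<le> 1" "1 \<le> s" "s \<le> n"
  shows "0 < \<beta> * p + (1 - \<beta>) * s / n" and "\<beta> * p + (1 - \<beta>) * s / n \<le> 1"
proof -
  have "0 < n"
    using assms by simp
  have "\<beta> * (1 + n) < 1"
    using assms by (simp add: pos_less_divide_eq)
  then have "\<beta> * n < 1 - \<beta>"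
    by (simp add: algebra_simps)
  moreover have "0 \<le> \<beta> * n"
    using assms by simp
  ultimately have "0 \<le> 1 - \<beta>"
    by linarith
  have "\<beta> < (1 - \<beta>) / n"
    using \<open>\<beta> * n < 1 - \<beta>\<close> \<open>0 < n\<close> by (simp add: pos_less_divide_eq)
  also have "(1 - \<beta>) / n \<le> (1 - \<beta>) * s / n"
    using mult_left_mono[OF \<open>1 \<le> s\<close> \<open>0 \<le> 1 - \<beta>\<close>] \<open>0 < n\<close> by (simp add: divide_right_mono)
  finally have neighbours_win: "\<beta> < (1 - \<beta>) * s / n" .
  have "(1 - \<beta>) * s \<le> (1 - \<beta>) * n"
    using assms \<open>0 \<le> 1 - \<beta>\<close> by (intro mult_left_mono)
  then have "(1 - \<beta>) * s / n \<le> 1 - \<beta>"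
    using \<open>0 < n\<close> by (simp add: pos_divide_le_eq)
  moreover have "\<bar>\<beta> * p\<bar> \<le> \<beta>"
    using assms mult_left_mono[of "\<bar>p\<bar>" 1 \<beta>] by (simp add: abs_mult)
  ultimately show "0 < \<beta> * p + (1 - \<beta>) * s / n" and "\<beta> * p + (1 - \<beta>) * s / n \<le> 1"
    using neighbours_win by linarith+
qed

lemma majority_update_nonneg:
  fixes \<beta> n p s :: real
  assumes "0 \<le> \<beta>" "\<beta> < 1 / (1 + n)" "1 \<le> n" "\<bar>p\<bar> \<le> 1" "1 \<le> s" "s \<le> n" "0 \<le> t"
  shows "0 \<le> opinion_update (\<beta> * p + (1 - \<beta>) * s / n) t"
  using target_bounds[OF assms(1-6)] assms(7) by (intro opinion_update_nonneg) auto

lemma majority_update_nonpos: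
  fixes \<beta> n p s :: real
  assumes "0 \<le> \<beta>" "\<beta> < 1 / (1 + n)" "1 \<le> n" "\<bar>p\<bar> \<le> 1" "s \<le> -1" "- n \<le> s" "t \<le> 0"
  shows "opinion_update (\<beta> * p + (1 - \<beta>) * s / n) t \<le> 0"
proof -
  have "0 \<le> opinion_update (\<beta> * (- p) + (1 - \<beta>) * (- s) / n) (- t)"
    using assms by (intro majority_update_nonneg) auto
  also have "\<dots> = - opinion_update (\<beta> * p + (1 - \<beta>) * s / n) t"
    using opinion_update_minus[of "\<beta> * p + (1 - \<beta>) * s / n" t] by simp
  finally show ?thesis
    by simp
qed

lemma weighted_drift_eq:
  assumes "finite N" "N \<noteq> {}"
  shows "\<beta> * (p - t) + (1 - \<beta>) * (1 / real (card N)) * (\<Sum>l\<in>N. x l - t)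
       = (\<beta> * p + (1 - \<beta>) * (\<Sum>l\<in>N. x l) / card N) - t"
  using assms by (simp add: sum_subtractf field_simps)

lemma sum_signs_eq_card_diff:
  fixes f :: "'a \<Rightarrow> real"
  assumes "finite A" "\<And>x. x \<in> A \<Longrightarrow> f x = 1 \<or> f x = -1"
  shows "(\<Sum>x\<in>A. f x) = real (card {x \<in> A. f x = 1}) - real (card {x \<in> A. f x = -1})"
proof -
  let ?P = "{x \<in> A. f x = 1}" and ?M = "{x \<in> A. f x = -1}"
  have "A = ?P \<union> ?M"
    using assms(2) by auto
  then have "(\<Sum>x\<in>A. f x) = (\<Sum>x\<in>?P \<union> ?M. f x)"
    by (rule arg_cong)
  also have "\<dots> = (\<Sum>x\<in>?P. f x) + (\<Sum>x\<in>?M. f x)"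
    using assms(1) by (intro sum.union_disjoint) auto
  also have "\<dots> = (\<Sum>x\<in>?P. 1) + (\<Sum>x\<in>?M. -1)"
    by (intro arg_cong2[where f = "(+)"] sum.cong) auto
  finally show ?thesis
    by simp
qed

lemma abs_sum_signs_le_card:
  fixes f :: "'a \<Rightarrow> real"
  assumes "\<And>x. x \<in> A \<Longrightarrow> f x = 1 \<or> f x = -1"
  shows "\<bar>\<Sum>x\<in>A. f x\<bar> \<le> card A"
proof -
  have "\<bar>\<Sum>x\<in>A. f x\<bar> \<le> (\<Sum>x\<in>A. \<bar>f x\<bar>)"
    by (rule sum_abs)
  also have "\<dots> = (\<Sum>x\<in>A. 1)"
    using assms by (intro sum.cong) fastforce+
  finally show ?thesis
    by simp
qed

theorem mainTheorem4:
  fixes V :: "'a set" and E :: "('a \<times> 'a) set"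
    and \<beta> :: real and qp :: "nat \<Rightarrow> real"
    and \<theta> :: "nat \<Rightarrow> 'a \<Rightarrow> real" and q :: "nat \<Rightarrow> 'a \<Rightarrow> real"
    and i :: 'a
  assumes finV: "finite V" and EV: "E \<subseteq> V \<times> V"
    and nonempty_nbrs: "\<And>j. j \<in> V \<Longrightarrow> nbrs V E j \<noteq> {}"
    and beta: "0 \<le> \<beta>" "\<beta> \<le> 1"
    and qp_vals: "\<And>k. qp k = 1 \<or> qp k = -1"
    and init: "\<And>j. j \<in> V \<Longrightarrow> -1 \<le> \<theta> 0 j \<and> \<theta> 0 j \<le> 1"
    and dyn: "\<And>k j. j \<in> V \<Longrightarrow> \<theta> (Suc k) j = \<theta> k j + (1 - (\<theta> k j)\<^sup>2) *
        (\<beta> * (qp k - \<theta> k j) + (1 - \<beta>) * (1 / real (card (nbrs V E j))) *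
           (\<Sum>l\<in>nbrs V E j. q k l - \<theta> k j))"
    and q_vals: "\<And>k j. j \<in> V \<Longrightarrow> q k j = 1 \<or> q k j = -1"
    and q_pos: "\<And>k j. j \<in> V \<Longrightarrow> \<theta> k j > 0 \<Longrightarrow> q k j = 1"
    and q_neg: "\<And>k j. j \<in> V \<Longrightarrow> \<theta> k j < 0 \<Longrightarrow> q k j = -1"
    and q_zero: "\<And>k j. j \<in> V \<Longrightarrow> \<theta> (Suc k) j = 0 \<Longrightarrow> q (Suc k) j = q k j"
    and iV: "i \<in> V"
    and init_i: "-1 < \<theta> 0 i" "\<theta> 0 i < 1"
    and beta_small: "\<beta> < 1 / (1 + real (card (nbrs V E i)))"
  shows "\<forall>k. (npos V E (q k) i > nneg V E (q k) i \<and> q k i = 1 \<longrightarrow> q (Suc k) i = 1)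
            \<and> (nneg V E (q k) i > npos V E (q k) i \<and> q k i = -1 \<longrightarrow> q (Suc k) i = -1)"
proof (intro allI conjI impI)
  fix k
  define N where "N = nbrs V E i"
  define n where "n = real (card N)"
  define s where "s = (\<Sum>l\<in>N. q k l)"
  have N: "finite N" "N \<noteq> {}" "N \<subseteq> V"
    using finV nonempty_nbrs[OF iV] unfolding N_def nbrs_def by auto
  then have "1 \<le> n"
    unfolding n_def by (simp add: Suc_leI card_gt_0_iff)
  have signs: "\<And>l. l \<in> N \<Longrightarrow> q k l = 1 \<or> q k l = -1"
    using N q_vals by blast
  have s_counts: "s = real (npos V E (q k) i) - real (nneg V E (q k) i)"
    unfolding s_def npos_def nneg_def N_def[symmetric] using sum_signs_eq_card_diff[OF N(1) signs] .
  have "\<bar>s\<bar> \<le> n"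
    unfolding s_def n_def using abs_sum_signs_le_card[OF signs] .
  have step: "\<theta> (Suc k) i = opinion_update (\<beta> * qp k + (1 - \<beta>) * s / n) (\<theta> k i)"
    using dyn[OF iV, of k] weighted_drift_eq[OF N(1,2)]
    unfolding opinion_update_def N_def[symmetric] s_def n_def by simp
  have beta_n: "\<beta> < 1 / (1 + n)" and qp_bound: "\<bar>qp k\<bar> \<le> 1"
    using beta_small qp_vals[of k] unfolding n_def N_def by auto
  note majority = majority_update_nonneg[OF beta(1) beta_n \<open>1 \<le> n\<close> qp_bound]
    majority_update_nonpos[OF beta(1) beta_n \<open>1 \<le> n\<close> qp_bound]
  show "q (Suc k) i = 1" if "nneg V E (q k) i < npos V E (q k) i \<and> q k i = 1"
  proof -
    have "0 \<le> \<theta> k i"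
      using that q_neg[OF iV, of k] by force
    then have "0 \<le> \<theta> (Suc k) i"
      unfolding step using that s_counts \<open>\<bar>s\<bar> \<le> n\<close> by (intro majority) auto
    then show ?thesis
      using that q_pos[OF iV, of "Suc k"] q_zero[OF iV, of k] by force
  qed
  show "q (Suc k) i = -1" if "npos V E (q k) i < nneg V E (q k) i \<and> q k i = -1"
  proof -
    have "\<theta> k i \<le> 0"
      using that q_pos[OF iV, of k] by force
    then have "\<theta> (Suc k) i \<le> 0"
      unfolding step using that s_counts \<open>\<bar>s\<bar> \<le> n\<close> by (intro majority) auto
    then show ?thesis
      using that q_neg[OF iV, of "Suc k"] q_zero[OF iV, of k] by force
  qed
qed

end
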